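(* Let $0<s<1$ and $0<a<1/3$, and let $C_a\subset I=[0,1]$ be the fat Cantor set described below. Then \[\|\chi_{C_a}\|_{B^s_{1,1}(I)}\le C\sum_{j=1}^\infty(2a^{1-s})^j,\] where $C$ depends only on $s$.
   Context: $I=[0,1]$ carries the Euclidean distance and Lebesgue measure $\mathcal{H}^1$. Construction of $C_a$: remove the open interval $I_{1,1}$ of length $a$ centered at the center of $I$, leaving two closed intervals $C_{1,1},C_{1,2}$. Inductively, at stage $j$, remove from the center of each of the $2^{j-1}$ closed intervals $C_{j-1,k}$ an open interval $I_{j,k}$ of length $a^j$, leaving $2^j$ closed intervals $C_{j,k}$. Set $C_a=I\setminus\bigcup_{j\ge1}\bigcup_{k=1}^{2^{j-1}}I_{j,k}$. The Besov energy on $I$ is $\|u\|_{B^s_{1,1}(I)}=\int_I\int_I\frac{|u(y)-u(x)|}{|x-y|^s\,\mathcal{H}^1(B(x,|x-y|))}\,dy\,dx$, where $B(x,r)=\{y\in I:|x-y|<r\}$. *)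

theory Defs
  imports "HOL-Analysis.Analysis"
begin

text \<open>Closed intervals C_{j,k} (as endpoint pairs) remaining after stage j of the construction.\<close>
fun cantor_stage :: "real \<Rightarrow> nat \<Rightarrow> (real \<times> real) set" where
  "cantor_stage a 0 = {(0, 1)}"
| "cantor_stage a (Suc j) =
     (\<Union>(l, r)\<in>cantor_stage a j.
        {(l, (l + r) / 2 - a ^ Suc j / 2), ((l + r) / 2 + a ^ Suc j / 2, r)})"

definition removed_intervals :: "real \<Rightarrow> nat \<Rightarrow> real set set" where
  "removed_intervals a j =
     (\<lambda>(l, r). {(l + r) / 2 - a ^ j / 2 <..< (l + r) / 2 + a ^ j / 2}) ` cantor_stage a (j - 1)"

definition fat_cantor :: "real \<Rightarrow> real set" where
  "fat_cantor a = {0..1} - (\<Union>j\<in>{1..}. \<Union>(removed_intervals a j))"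

text \<open>Besov energy on I = [0,1], with B(x,r) = {y in I. |x - y| < r}.\<close>
definition besov_energy :: "real \<Rightarrow> (real \<Rightarrow> real) \<Rightarrow> ennreal" where
  "besov_energy s u =
     (\<integral>\<^sup>+ x \<in> {0..1}. (\<integral>\<^sup>+ y \<in> {0..1}.
        ennreal (\<bar>u y - u x\<bar> /
          (\<bar>x - y\<bar> powr s * measure lborel {z \<in> {0..1}. \<bar>x - z\<bar> < \<bar>x - y\<bar>})) \<partial>lborel) \<partial>lborel)"

end

theory Submission
  imports Defs
begin

text \<open>Since the ball \<open>B(x, |x - y|)\<close> in \<open>[0,1]\<close> has measure at least \<open>|x - y|\<close>, the
  Besov energy of \<open>\<chi>\<close> is at most \<open>\<integral>\<integral> |\<chi>(y) - \<chi>(x)| |x - y| ^ (-1-s)\<close> over \<open>[0,1]\<^sup>2\<close>.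
  If exactly one of \<open>x, y\<close> lies in \<open>C\<^sub>a\<close>, the other one lies in a removed interval, which
  misses \<open>C\<^sub>a\<close>, so the jump of \<open>\<chi>\<close> is dominated by the sum of the jumps of the indicators of
  the removed intervals. Hence the energy is at most the sum of the fractional perimeters of the
  removed intervals; an interval of length \<open>l\<close> has fractional perimeter
  \<open>4 l ^ (1-s) / (s (1 - s))\<close>, and at stage \<open>j\<close> at most \<open>2 ^ (j-1)\<close> intervals of length
  \<open>a ^ j\<close> are removed.\<close>

lemma powr_power_commute:
  fixes a b :: real
  assumes "0 < a"
  shows "(a ^ n) powr b = (a powr b) ^ n"
  using assms by (simp add: powr_power powr_powr mult.commute flip: powr_realpow)

lemma nn_integral_powr_tail_right:
  fixes s x c :: real
  assumes s: "0 < s" and c: "x < c"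
  shows "(\<integral>\<^sup>+y\<in>{c..}. ennreal ((y - x) powr (-1-s)) \<partial>lborel) = ennreal ((c - x) powr (-s) / s)"
proof -
  have "(\<integral>\<^sup>+y\<in>{c..}. ennreal ((y - x) powr (-1-s)) \<partial>lborel) = ennreal (0 - (- ((c - x) powr (-s)) / s))"
  proof (rule nn_integral_FTC_atLeast[where F="\<lambda>y. - ((y - x) powr (-s)) / s"])
    fix y assume "c \<le> y"
    then have "y - x > 0" using c by simp
    then show "((\<lambda>y. - ((y - x) powr - s) / s) has_real_derivative (y - x) powr (-1-s)) (at y)"
      using s by (auto intro!: derivative_eq_intros) (rule arg_cong[where f="(powr) (y - x)"], simp)
  next
    have "((\<lambda>y. (y - x) powr - s) \<longlongrightarrow> 0) at_top"
      by (rule tendsto_neg_powr)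
        (use s in \<open>auto intro!: filterlim_tendsto_add_at_top[where f="\<lambda>_. - x", simplified] filterlim_ident\<close>)
    then show "((\<lambda>y. - ((y - x) powr - s) / s) \<longlongrightarrow> 0) at_top"
      using tendsto_divide_zero tendsto_minus by fastforce
  qed auto
  then show ?thesis by simp
qed

lemma nn_integral_powr_tail_left:
  fixes s x c :: real
  assumes s: "0 < s" and c: "c < x"
  shows "(\<integral>\<^sup>+y\<in>{..c}. ennreal ((x - y) powr (-1-s)) \<partial>lborel) = ennreal ((x - c) powr (-s) / s)"
proof -
  have "(\<integral>\<^sup>+y\<in>{..c}. ennreal ((x - y) powr (-1-s)) \<partial>lborel)
     = ennreal \<bar>-1\<bar> * (\<integral>\<^sup>+y. ennreal ((x - (0 + -1 * y)) powr (-1-s)) * indicator {..c} (0 + -1 * y) \<partial>lborel)"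
    by (rule nn_integral_real_affine) auto
  also have "\<dots> = (\<integral>\<^sup>+y\<in>{-c..}. ennreal ((y - (-x)) powr (-1-s)) \<partial>lborel)"
    by (auto intro!: nn_integral_cong simp: indicator_def add.commute)
  also have "\<dots> = ennreal ((x - c) powr (-s) / s)"
    using nn_integral_powr_tail_right[OF s, of "-x" "-c"] c by simp
  finally show ?thesis .
qed

lemma nn_integral_powr_outside_interval:
  fixes s p q x :: real
  assumes s: "0 < s" and x: "p < x" "x < q"
  shows "(\<integral>\<^sup>+y\<in>-{p<..<q}. ennreal (\<bar>x - y\<bar> powr (-1-s)) \<partial>lborel)
     = ennreal (((x - p) powr (-s) + (q - x) powr (-s)) / s)"
proof -
  have "(\<integral>\<^sup>+y\<in>-{p<..<q}. ennreal (\<bar>x - y\<bar> powr (-1-s)) \<partial>lborel)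
    = (\<integral>\<^sup>+y. ennreal ((x - y) powr (-1-s)) * indicator {..p} y
              + ennreal ((y - x) powr (-1-s)) * indicator {q..} y \<partial>lborel)"
    using x by (intro nn_integral_cong) (auto simp: indicator_def abs_if)
  also have "\<dots> = (\<integral>\<^sup>+y\<in>{..p}. ennreal ((x - y) powr (-1-s)) \<partial>lborel)
     + (\<integral>\<^sup>+y\<in>{q..}. ennreal ((y - x) powr (-1-s)) \<partial>lborel)"
    by (rule nn_integral_add) auto
  also have "\<dots> = ennreal ((x - p) powr (-s) / s) + ennreal ((q - x) powr (-s) / s)"
    using nn_integral_powr_tail_right[OF s x(2)] nn_integral_powr_tail_left[OF s x(1)] by simp
  also have "\<dots> = ennreal (((x - p) powr (-s) + (q - x) powr (-s)) / s)"
    using s by (simp add: ennreal_plus[symmetric] add_divide_distrib del: ennreal_plus)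
  finally show ?thesis .
qed

lemma nn_integral_powr_endpoints:
  fixes s p q :: real
  assumes s: "0 < s" "s < 1" and pq: "p < q"
  shows "(\<integral>\<^sup>+x\<in>{p<..<q}. ennreal (((x - p) powr (-s) + (q - x) powr (-s)) / s) \<partial>lborel)
     = ennreal (2 * (q - p) powr (1-s) / (s * (1-s)))"
proof -
  define F where "F x = ((x - p) powr (1-s) - (q - x) powr (1-s)) / (s * (1-s))" for x
  have "((\<lambda>x. ((x - p) powr (-s) + (q - x) powr (-s)) / s) has_integral (F q - F p)) {p..q}"
  proof (rule fundamental_theorem_of_calculus_interior)
    show "continuous_on {p..q} F"
      unfolding F_def using s by (intro continuous_intros continuous_on_powr') auto
    fix x assume "x \<in> {p<..<q}"
    then show "(F has_vector_derivative ((x - p) powr (-s) + (q - x) powr (-s)) / s) (at x)"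
      unfolding F_def has_real_derivative_iff_has_vector_derivative[symmetric] using s
      by (auto intro!: derivative_eq_intros) (simp add: mult.commute[of s] flip: distrib_left)
  qed (use pq in simp)
  moreover have "F q - F p = 2 * (q - p) powr (1-s) / (s * (1-s))"
    unfolding F_def using pq by (simp add: field_simps)
  ultimately have integral: "((\<lambda>x. ((x - p) powr (-s) + (q - x) powr (-s)) / s)
      has_integral 2 * (q - p) powr (1-s) / (s * (1-s))) {p<..<q}"
    by (simp add: has_integral_Icc_iff_Ioo)
  have "(\<integral>\<^sup>+x\<in>{p<..<q}. ennreal (((x - p) powr (-s) + (q - x) powr (-s)) / s) \<partial>lborel)
    = (\<integral>\<^sup>+x. ennreal (indicator {p<..<q} x * (((x - p) powr (-s) + (q - x) powr (-s)) / s)) \<partial>lborel)"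
    by (intro nn_integral_cong) (simp split: split_indicator)
  then show ?thesis
    using nn_integral_has_integral_lebesgue[OF _ integral] s by simp
qed

definition fractional_perimeter :: "real \<Rightarrow> real set \<Rightarrow> ennreal" where
  "fractional_perimeter s A =
     (\<integral>\<^sup>+x. \<integral>\<^sup>+y. ennreal (\<bar>indicator A y - indicator A x\<bar> * \<bar>x - y\<bar> powr (-1-s)) \<partial>lborel \<partial>lborel)"

lemma fractional_perimeter_eq_cross_integral:
  assumes [measurable]: "A \<in> sets borel"
  shows "fractional_perimeter s A
     = 2 * (\<integral>\<^sup>+x\<in>A. \<integral>\<^sup>+y\<in>-A. ennreal (\<bar>x - y\<bar> powr (-1-s)) \<partial>lborel \<partial>lborel)"
proof -
  define g where "g x y = ennreal (\<bar>x - y\<bar> powr (-1-s)) * indicator (-A) y * indicator A x"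
    for x y :: real
  have [measurable]: "(\<lambda>(x, y). g x y) \<in> borel_measurable (lborel \<Otimes>\<^sub>M lborel)"
    unfolding g_def by measurable
  have "fractional_perimeter s A = (\<integral>\<^sup>+x. \<integral>\<^sup>+y. g x y + g y x \<partial>lborel \<partial>lborel)"
    unfolding fractional_perimeter_def g_def
    by (intro nn_integral_cong) (auto simp: indicator_def abs_minus_commute)
  also have "\<dots> = (\<integral>\<^sup>+x. (\<integral>\<^sup>+y. g x y \<partial>lborel) + (\<integral>\<^sup>+y. g y x \<partial>lborel) \<partial>lborel)"
    by (intro nn_integral_cong nn_integral_add) auto
  also have "\<dots> = (\<integral>\<^sup>+x. \<integral>\<^sup>+y. g x y \<partial>lborel \<partial>lborel) + (\<integral>\<^sup>+x. \<integral>\<^sup>+y. g y x \<partial>lborel \<partial>lborel)"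
    by (rule nn_integral_add) measurable
  also have "(\<integral>\<^sup>+x. \<integral>\<^sup>+y. g y x \<partial>lborel \<partial>lborel) = (\<integral>\<^sup>+x. \<integral>\<^sup>+y. g x y \<partial>lborel \<partial>lborel)"
    by (rule lborel_pair.Fubini'[of "\<lambda>y x. g x y", symmetric]) (simp add: case_prod_beta)
  also have "(\<integral>\<^sup>+x. \<integral>\<^sup>+y. g x y \<partial>lborel \<partial>lborel)
      = (\<integral>\<^sup>+x\<in>A. \<integral>\<^sup>+y\<in>-A. ennreal (\<bar>x - y\<bar> powr (-1-s)) \<partial>lborel \<partial>lborel)"
    unfolding g_def by (intro nn_integral_cong nn_integral_multc) measurable
  finally show ?thesis
    by (simp add: mult_2)
qed

lemma fractional_perimeter_interval:
  fixes s p q :: real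
  assumes s: "0 < s" "s < 1" and pq: "p < q"
  shows "fractional_perimeter s {p<..<q} = ennreal (4 * (q - p) powr (1-s) / (s * (1-s)))"
proof -
  have "fractional_perimeter s {p<..<q}
     = 2 * (\<integral>\<^sup>+x\<in>{p<..<q}. ennreal (((x - p) powr (-s) + (q - x) powr (-s)) / s) \<partial>lborel)"
    unfolding fractional_perimeter_eq_cross_integral[OF borel_open[OF open_greaterThanLessThan]]
    using s by (intro arg_cong[where f="(*) 2"] set_nn_integral_cong)
      (auto simp: nn_integral_powr_outside_interval)
  also have "\<dots> = ennreal (4 * (q - p) powr (1-s) / (s * (1-s)))"
    using s pq by (simp add: nn_integral_powr_endpoints numeral_mult_ennreal)
  finally show ?thesis .
qed

lemma measure_unit_interval_ball_ge:
  fixes x y :: real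
  assumes "x \<in> {0..1}" "y \<in> {0..1}"
  shows "\<bar>x - y\<bar> \<le> measure lborel {z \<in> {0..1}. \<bar>x - z\<bar> < \<bar>x - y\<bar>}"
proof -
  have "{z \<in> {0..1}. \<bar>x - z\<bar> < \<bar>x - y\<bar>} \<in> fmeasurable lborel"
    by (rule fmeasurableI2[OF fmeasurable_cbox[of 0 1]]) (auto simp: cbox_interval)
  moreover have "{min x y<..<max x y} \<subseteq> {z \<in> {0..1}. \<bar>x - z\<bar> < \<bar>x - y\<bar>}"
    using assms by auto
  ultimately have "measure lborel {min x y<..<max x y} \<le> measure lborel {z \<in> {0..1}. \<bar>x - z\<bar> < \<bar>x - y\<bar>}"
    by (intro measure_mono_fmeasurable) auto
  then show ?thesis
    by (simp add: max_def min_def split: if_splits)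
qed

lemma besov_weight_le_powr:
  fixes c x y :: real
  assumes c: "0 \<le> c" and xy: "x \<in> {0..1}" "y \<in> {0..1}"
  shows "c / (\<bar>x - y\<bar> powr s * measure lborel {z \<in> {0..1}. \<bar>x - z\<bar> < \<bar>x - y\<bar>})
     \<le> c * \<bar>x - y\<bar> powr (-1-s)"
proof (cases "x = y")
  case False
  let ?m = "measure lborel {z \<in> {0..1}. \<bar>x - z\<bar> < \<bar>x - y\<bar>}"
  have le: "\<bar>x - y\<bar> powr (1 + s) \<le> \<bar>x - y\<bar> powr s * ?m"
    using mult_left_mono[OF measure_unit_interval_ball_ge[OF xy], of "\<bar>x - y\<bar> powr s"]
    by (simp add: powr_add mult.commute)
  have pos: "0 < \<bar>x - y\<bar> powr (1 + s)"
    using False by simp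
  have "c / (\<bar>x - y\<bar> powr s * ?m) \<le> c / \<bar>x - y\<bar> powr (1 + s)"
    by (rule divide_left_mono[OF le c], rule mult_pos_pos) (use le pos in linarith)+
  also have "\<dots> = c * \<bar>x - y\<bar> powr (-1-s)"
    using powr_minus_divide[of "\<bar>x - y\<bar>" "1 + s"] by simp
  finally show ?thesis .
qed simp

lemma besov_energy_le_kernel_integral:
  "besov_energy s u
     \<le> (\<integral>\<^sup>+x\<in>{0..1}. \<integral>\<^sup>+y\<in>{0..1}. ennreal (\<bar>u y - u x\<bar> * \<bar>x - y\<bar> powr (-1-s)) \<partial>lborel \<partial>lborel)"
  unfolding besov_energy_def
proof (intro nn_integral_mono)
  fix x :: real
  have "ennreal (\<bar>u y - u x\<bar> / (\<bar>x - y\<bar> powr s * measure lborel {z \<in> {0..1}. \<bar>x - z\<bar> < \<bar>x - y\<bar>}))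
      * indicator {0..1} y
    \<le> ennreal (\<bar>u y - u x\<bar> * \<bar>x - y\<bar> powr (-1-s)) * indicator {0..1} y"
    if "x \<in> {0..1}" for y
  proof (cases "y \<in> {0..1}")
    case True
    then show ?thesis
      using besov_weight_le_powr[OF abs_ge_zero that True] by (simp add: ennreal_leI)
  qed simp
  then show "(\<integral>\<^sup>+y\<in>{0..1}. ennreal (\<bar>u y - u x\<bar> /
        (\<bar>x - y\<bar> powr s * measure lborel {z \<in> {0..1}. \<bar>x - z\<bar> < \<bar>x - y\<bar>})) \<partial>lborel) * indicator {0..1} x
    \<le> (\<integral>\<^sup>+y\<in>{0..1}. ennreal (\<bar>u y - u x\<bar> * \<bar>x - y\<bar> powr (-1-s)) \<partial>lborel) * indicator {0..1} x"
    by (cases "x \<in> {0..1}") (simp_all add: nn_integral_mono)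
qed

text \<open>\<open>stage_gap a j P\<close> is the interval \<open>I\<^sub>j\<^sub>+\<^sub>1\<^sub>,\<^sub>k\<close> removed from \<open>P = C\<^sub>j\<^sub>,\<^sub>k\<close>.\<close>

definition stage_gap :: "real \<Rightarrow> nat \<Rightarrow> real \<times> real \<Rightarrow> real set" where
  "stage_gap a j P =
     {(fst P + snd P) / 2 - a ^ Suc j / 2 <..< (fst P + snd P) / 2 + a ^ Suc j / 2}"

lemma removed_intervals_Suc: "removed_intervals a (Suc j) = stage_gap a j ` cantor_stage a j"
  unfolding removed_intervals_def stage_gap_def by (simp add: case_prod_beta')

lemma fat_cantor_eq: "fat_cantor a = {0..1} - (\<Union>j. \<Union>P\<in>cantor_stage a j. stage_gap a j P)"
proof -
  have "(\<Union>j\<in>{1..}. \<Union>(removed_intervals a j)) = (\<Union>j. \<Union>(removed_intervals a (Suc j)))"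
    by (auto simp: atLeast_Suc_greaterThan) (metis Suc_pred')
  then show ?thesis
    unfolding fat_cantor_def by (simp add: removed_intervals_Suc)
qed

lemma finite_cantor_stage: "finite (cantor_stage a j)"
  by (induction j) auto

lemma card_cantor_stage_le: "card (cantor_stage a j) \<le> 2 ^ j"
proof (induction j)
  case (Suc j)
  let ?children = "\<lambda>(l, r). {(l, (l + r) / 2 - a ^ Suc j / 2), ((l + r) / 2 + a ^ Suc j / 2, r)}"
  have "card (cantor_stage a (Suc j)) \<le> (\<Sum>P\<in>cantor_stage a j. card (?children P))"
    unfolding cantor_stage.simps by (rule card_UN_le[OF finite_cantor_stage])
  also have "\<dots> \<le> (\<Sum>P\<in>cantor_stage a j. 2)"
    by (intro sum_mono) (auto simp: card_insert_le_m1)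
  also have "\<dots> \<le> 2 ^ Suc j"
    using Suc by simp
  finally show ?case .
qed simp

lemma fat_cantor_jump_le_gap_jumps:
  fixes x y w :: real
  assumes "x \<in> {0..1}" "y \<in> {0..1}"
  shows "ennreal (\<bar>indicator (fat_cantor a) y - indicator (fat_cantor a) x\<bar> * w)
     \<le> (\<Sum>j. \<Sum>P\<in>cantor_stage a j. ennreal (\<bar>indicator (stage_gap a j P) y - indicator (stage_gap a j P) x\<bar> * w))"
proof (cases "x \<in> fat_cantor a \<longleftrightarrow> y \<in> fat_cantor a")
  case False
  then obtain j P where P: "P \<in> cantor_stage a j" and sep: "\<not> (x \<in> stage_gap a j P \<longleftrightarrow> y \<in> stage_gap a j P)"
    using assms unfolding fat_cantor_eq by blast
  have "ennreal (\<bar>indicator (fat_cantor a) y - indicator (fat_cantor a) x\<bar> * w)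
      = ennreal (\<bar>indicator (stage_gap a j P) y - indicator (stage_gap a j P) x\<bar> * w)"
    using False sep by (auto simp: indicator_def)
  also have "\<dots> \<le> (\<Sum>P\<in>cantor_stage a j. ennreal (\<bar>indicator (stage_gap a j P) y - indicator (stage_gap a j P) x\<bar> * w))"
    by (rule member_le_sum) (use P finite_cantor_stage in auto)
  also have "\<dots> \<le> (\<Sum>j. \<Sum>P\<in>cantor_stage a j. ennreal (\<bar>indicator (stage_gap a j P) y - indicator (stage_gap a j P) x\<bar> * w))"
    by (rule sum_le_suminf[OF summableI, of "{j}", simplified])
  finally show ?thesis .
qed (simp add: indicator_def)

lemma besov_energy_fat_cantor_le_gap_perimeters:
  "besov_energy s (indicator (fat_cantor a))
     \<le> (\<Sum>j. \<Sum>P\<in>cantor_stage a j. fractional_perimeter s (stage_gap a j P))"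
proof -
  define jump where "jump j P x y =
      ennreal (\<bar>indicator (stage_gap a j P) y - indicator (stage_gap a j P) x\<bar> * \<bar>x - y\<bar> powr (-1-s))"
    for j P and x y :: real
  have [measurable]: "(\<lambda>(x, y). jump j P x y) \<in> borel_measurable (lborel \<Otimes>\<^sub>M lborel)" for j P
    unfolding jump_def stage_gap_def by measurable
  have "besov_energy s (indicator (fat_cantor a))
      \<le> (\<integral>\<^sup>+x\<in>{0..1}. \<integral>\<^sup>+y\<in>{0..1}. ennreal (\<bar>indicator (fat_cantor a) y - indicator (fat_cantor a) x\<bar>
            * \<bar>x - y\<bar> powr (-1-s)) \<partial>lborel \<partial>lborel)"
    by (rule besov_energy_le_kernel_integral)
  also have "\<dots> \<le> (\<integral>\<^sup>+x. \<integral>\<^sup>+y. (\<Sum>j. \<Sum>P\<in>cantor_stage a j. jump j P x y) \<partial>lborel \<partial>lborel)"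
  proof (intro nn_integral_mono)
    fix x :: real
    have "ennreal (\<bar>indicator (fat_cantor a) y - indicator (fat_cantor a) x\<bar> * \<bar>x - y\<bar> powr (-1-s))
        * indicator {0..1} y \<le> (\<Sum>j. \<Sum>P\<in>cantor_stage a j. jump j P x y)"
      if "x \<in> {0..1}" for y
    proof (cases "y \<in> {0..1}")
      case True
      then show ?thesis
        using fat_cantor_jump_le_gap_jumps[OF that True] by (simp only: jump_def indicator_simps mult_1_right)
    qed simp
    then show "(\<integral>\<^sup>+y\<in>{0..1}. ennreal (\<bar>indicator (fat_cantor a) y - indicator (fat_cantor a) x\<bar>
          * \<bar>x - y\<bar> powr (-1-s)) \<partial>lborel) * indicator {0..1} x
      \<le> (\<integral>\<^sup>+y. (\<Sum>j. \<Sum>P\<in>cantor_stage a j. jump j P x y) \<partial>lborel)"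
      by (cases "x \<in> {0..1}") (simp_all add: nn_integral_mono)
  qed
  also have "\<dots> = (\<Sum>j. \<Sum>P\<in>cantor_stage a j. \<integral>\<^sup>+x. \<integral>\<^sup>+y. jump j P x y \<partial>lborel \<partial>lborel)"
    by (simp add: nn_integral_suminf nn_integral_sum)
  also have "\<dots> = (\<Sum>j. \<Sum>P\<in>cantor_stage a j. fractional_perimeter s (stage_gap a j P))"
    unfolding jump_def fractional_perimeter_def ..
  finally show ?thesis .
qed

lemma gap_perimeters_le_geometric_series:
  fixes s a :: real
  assumes s: "0 < s" "s < 1" and a: "0 < a"
  shows "(\<Sum>j. \<Sum>P\<in>cantor_stage a j. fractional_perimeter s (stage_gap a j P))
     \<le> ennreal (2 / (s * (1-s))) * (\<Sum>j. ennreal ((2 * a powr (1-s)) ^ Suc j))"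
proof -
  have "(\<Sum>P\<in>cantor_stage a j. fractional_perimeter s (stage_gap a j P))
      \<le> ennreal (2 / (s * (1-s))) * ennreal ((2 * a powr (1-s)) ^ Suc j)" for j
  proof -
    let ?c = "4 * (a ^ Suc j) powr (1-s) / (s * (1-s))"
    have "(\<Sum>P\<in>cantor_stage a j. fractional_perimeter s (stage_gap a j P)) = of_nat (card (cantor_stage a j)) * ennreal ?c"
      using s a by (simp add: stage_gap_def fractional_perimeter_interval)
    also have "\<dots> \<le> of_nat (2 ^ j) * ennreal ?c"
      by (intro mult_right_mono of_nat_mono card_cantor_stage_le) simp
    also have "\<dots> = ennreal (2 ^ j * ?c)"
      by (subst ennreal_mult) (use s in \<open>auto simp flip: ennreal_power\<close>)
    also have "2 ^ j * ?c = 2 / (s * (1-s)) * (2 * a powr (1-s)) ^ Suc j"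
      using powr_power_commute[OF a, of "Suc j" "1 - s"] by (simp add: power_mult_distrib)
    also have "ennreal (2 / (s * (1-s)) * (2 * a powr (1-s)) ^ Suc j)
        = ennreal (2 / (s * (1-s))) * ennreal ((2 * a powr (1-s)) ^ Suc j)"
      by (rule ennreal_mult) (use s in auto)
    finally show ?thesis .
  qed
  then have "(\<Sum>j. \<Sum>P\<in>cantor_stage a j. fractional_perimeter s (stage_gap a j P))
      \<le> (\<Sum>j. ennreal (2 / (s * (1-s))) * ennreal ((2 * a powr (1-s)) ^ Suc j))"
    by (intro suminf_le) auto
  also have "\<dots> = ennreal (2 / (s * (1-s))) * (\<Sum>j. ennreal ((2 * a powr (1-s)) ^ Suc j))"
    by (rule ennreal_suminf_cmult)
  finally show ?thesis .
qed

theorem lemma4p1: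
  fixes s :: real
  assumes "0 < s" and "s < 1"
  shows "\<exists>C::real. C > 0 \<and> (\<forall>a::real. 0 < a \<and> a < 1/3 \<longrightarrow>
           besov_energy s (indicator (fat_cantor a))
             \<le> ennreal C * (\<Sum>j. ennreal ((2 * a powr (1 - s)) ^ Suc j)))"
proof (intro exI[of _ "2 / (s * (1-s))"] conjI allI impI)
  show "0 < 2 / (s * (1-s))"
    using assms by simp
  fix a :: real
  \<comment> \<open>The bound holds for every \<open>a > 0\<close>.\<close>
  assume "0 < a \<and> a < 1/3"
  then show "besov_energy s (indicator (fat_cantor a))
      \<le> ennreal (2 / (s * (1-s))) * (\<Sum>j. ennreal ((2 * a powr (1 - s)) ^ Suc j))"
    using besov_energy_fat_cantor_le_gap_perimeters gap_perimeters_le_geometric_series assms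
    by (meson order_trans)
qed

end
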